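(* Let $\sigma$ be the map $\sigma^a(R)=hR^aJ(g;R)$, $\sigma^N(R)=A(g;R)J(g;R)$, let $\sigma^q_p=\partial\sigma^q/\partial R^p$, and for $R$ with $q(R)>0$ put $t=\sigma(R)$, $S(t)=\sqrt{r_{rs}t^rt^s}$, $L^p=t^p/S(t)$, $L_p=r_{pq}L^q$. Then $$n^{rs}:=\sigma^r_p\,\sigma^s_q\,g^{pq}(g;R)=h^2r^{rs}+\tfrac14g^2L^rL^s,$$ its inverse is $$n_{rs}=\frac1{h^2}r_{rs}-\frac14G^2L_rL_s,$$ and $\det(n_{rs})=h^{2(1-N)}\det(r_{ab})$.
   Context: Let $N\ge2$, $V_N=\mathbb{R}^N$ with points $R=(R^1,\dots,R^N)$, $Z=R^N$; indices $a,b$ run over $1,\dots,N-1$, $p,q,r,s$ over $1,\dots,N$, repeated indices summed. Fix a symmetric positive-definite matrix $(r_{ab})$, $q(R)=\sqrt{r_{ab}R^aR^b}$, and let $r_{pq}$ be the $N\times N$ matrix with $r_{NN}=1$, $r_{Na}=0$ and entries $r_{ab}$, with inverse $r^{pq}$. Fix $g\in(-2,2)$, $h=\sqrt{1-g^2/4}$, $G=g/h$. Define $B(g;R)=Z^2+gqZ+q^2$, $A(g;R)=Z+\frac12gq$, $\Phi(g;R)=\arctan(A/(hq))$ for $q>0$ ($\Phi=\pm\pi/2$ if $q=0$, $Z\gtrless0$), $J(g;R)=e^{\frac12G\Phi}$, the Finsleroid metric function $K(g;R)=\sqrt{B}\,J$, the Finsler metric tensor $g_{pq}=\frac12\partial^2K^2/\partial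 R^p\partial R^q$ and its inverse $g^{pq}$. *)

theory Defs
  imports "HOL-Analysis.Analysis"
begin

text \<open>Points of V_N = R^N are vectors indexed by 'm option: the indices
  a = 1..N-1 are the elements Some a (a :: 'm), the index N is None.
  Hence N = CARD('m option) = CARD('m) + 1.  The matrix (r_ab) is a
  real^'m^'m.\<close>

definition Zc :: "real^('m::finite option) \<Rightarrow> real" where
  "Zc R = R $ None"

definition qf :: "real^'m^'m \<Rightarrow> real^('m::finite option) \<Rightarrow> real" where
  "qf r R = sqrt (\<Sum>a\<in>UNIV. \<Sum>b\<in>UNIV. r $ a $ b * R $ Some a * R $ Some b)"

definition rfull :: "real^'m^'m \<Rightarrow> real^('m::finite option)^('m option)" where
  "rfull r = (\<chi> p q. case (p, q) of
       (Some a, Some b) \<Rightarrow> r $ a $ b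
     | (None, None) \<Rightarrow> 1
     | _ \<Rightarrow> 0)"

definition hh :: "real \<Rightarrow> real" where
  "hh g = sqrt (1 - g^2 / 4)"

definition GG :: "real \<Rightarrow> real" where
  "GG g = g / hh g"

definition Bf :: "real \<Rightarrow> real^'m^'m \<Rightarrow> real^('m::finite option) \<Rightarrow> real" where
  "Bf g r R = (Zc R)^2 + g * qf r R * Zc R + (qf r R)^2"

definition Af :: "real \<Rightarrow> real^'m^'m \<Rightarrow> real^('m::finite option) \<Rightarrow> real" where
  "Af g r R = Zc R + g * qf r R / 2"

definition Phif :: "real \<Rightarrow> real^'m^'m \<Rightarrow> real^('m::finite option) \<Rightarrow> real" where
  "Phif g r R = (if qf r R > 0 then arctan (Af g r R / (hh g * qf r R))
                 else if Zc R > 0 then pi / 2 else - pi / 2)"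

definition Jf :: "real \<Rightarrow> real^'m^'m \<Rightarrow> real^('m::finite option) \<Rightarrow> real" where
  "Jf g r R = exp (GG g / 2 * Phif g r R)"

definition Kf :: "real \<Rightarrow> real^'m^'m \<Rightarrow> real^('m::finite option) \<Rightarrow> real" where
  "Kf g r R = sqrt (Bf g r R) * Jf g r R"

definition partial :: "'n::finite \<Rightarrow> (real^'n \<Rightarrow> real) \<Rightarrow> real^'n \<Rightarrow> real" where
  "partial p f R = deriv (\<lambda>s. f (R + s *\<^sub>R axis p 1)) 0"

definition gmet :: "real \<Rightarrow> real^'m^'m \<Rightarrow> real^('m::finite option)
                    \<Rightarrow> real^('m option)^('m option)" where
  "gmet g r R = (\<chi> p q. partial p (\<lambda>X. partial q (\<lambda>Y. (Kf g r Y)^2 / 2) X) R)"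

definition sigma :: "real \<Rightarrow> real^'m^'m \<Rightarrow> real^('m::finite option) \<Rightarrow> real^('m option)" where
  "sigma g r R = (\<chi> p. case p of Some a \<Rightarrow> hh g * R $ Some a * Jf g r R
                               | None \<Rightarrow> Af g r R * Jf g r R)"

definition sigjac :: "real \<Rightarrow> real^'m^'m \<Rightarrow> real^('m::finite option)
                      \<Rightarrow> 'm option \<Rightarrow> 'm option \<Rightarrow> real" where
  "sigjac g r R q p = partial p (\<lambda>X. sigma g r X $ q) R"

definition Sf :: "real^'m^'m \<Rightarrow> real^('m::finite option) \<Rightarrow> real" where
  "Sf r t = sqrt (\<Sum>p\<in>UNIV. \<Sum>q\<in>UNIV. rfull r $ p $ q * t $ p * t $ q)"

end

theory Submission
  imports Defs
begin

(* The differential sigma' of sigma pulls the matrix n_rs = r_rs / h^2 - G^2/4 L_r L_s back to the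
   Finsler metric: g_pq = sigma'^r_p n_rs sigma'^s_q.  This is checked by differentiating
   K^2/2 = B J^2/2 twice along coordinate lines; expressed through Z, q(R), J and the components of
   the two directions, it becomes a single polynomial identity.  As sigma' is invertible,
   sigma' g^-1 sigma'^T is the inverse of n_rs, which by a Sherman-Morrison computation
   (L_r L^r = 1 and h^2 + g^2/4 = 1) is the claimed n^rs.  For the determinant, h^2 n_rs is r_rs
   times the rank-one update I - g^2/4 L^r L_s, whose determinant is 1 - g^2/4 = h^2, and
   det r_pq = det r_ab. *)

section \<open>Matrix algebra\<close>

lemma matrix_inv_unique:
  fixes A B :: "'a::field^'n^'n"
  assumes "A ** B = mat 1"
  shows "matrix_inv A = B"
proof -
  have "B ** A = mat 1"
    using assms matrix_left_right_inverse by blast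
  then have inv: "A ** matrix_inv A = mat 1 \<and> matrix_inv A ** A = mat 1"
    unfolding matrix_inv_def using assms by (intro someI_ex[of "\<lambda>A'. A ** A' = mat 1 \<and> A' ** A = mat 1"]) blast
  have "matrix_inv A = (matrix_inv A ** A) ** B"
    by (metis assms matrix_mul_assoc matrix_mul_rid)
  then show ?thesis
    using inv by simp
qed

lemma matrix_inv_invertible:
  fixes A :: "'a::field^'n^'n"
  assumes "invertible A"
  shows "A ** matrix_inv A = mat 1" "matrix_inv A ** A = mat 1"
proof -
  obtain B where "A ** B = mat 1"
    using assms invertible_def by blast
  then show "A ** matrix_inv A = mat 1" "matrix_inv A ** A = mat 1"
    using matrix_inv_unique matrix_left_right_inverse by metis+
qed

lemma invertible_if_trivial_kernel:
  fixes A :: "'a::field^'n^'n"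
  assumes "\<And>x. A *v x = 0 \<Longrightarrow> x = 0"
  shows "invertible A"
  using assms matrix_left_invertible_ker invertible_left_inverse by blast

lemma matrix_inv_congruence:
  fixes P N M :: "'a::field^'n^'n"
  assumes P: "invertible P" and NM: "N ** M = mat 1"
  shows "P ** matrix_inv (transpose P ** N ** P) ** transpose P = M"
proof -
  let ?Q = "matrix_inv P"
  have "(transpose P ** N ** P) ** (?Q ** M ** transpose ?Q) = transpose P ** (N ** (P ** ?Q) ** M) ** transpose ?Q"
    by (simp only: matrix_mul_assoc)
  also have "\<dots> = transpose P ** transpose ?Q"
    by (simp add: matrix_inv_invertible[OF P] NM matrix_mul_lid matrix_mul_rid)
  also have "\<dots> = transpose (?Q ** P)"
    by (simp add: matrix_transpose_mul)
  also have "\<dots> = mat 1"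
    by (simp add: matrix_inv_invertible[OF P])
  finally have "matrix_inv (transpose P ** N ** P) = ?Q ** M ** transpose ?Q"
    by (rule matrix_inv_unique)
  moreover have "P ** (?Q ** M ** transpose ?Q) ** transpose P = (P ** ?Q) ** M ** transpose (P ** ?Q)"
    by (simp only: matrix_mul_assoc matrix_transpose_mul)
  ultimately show ?thesis
    by (simp add: matrix_inv_invertible[OF P] matrix_mul_lid matrix_mul_rid)
qed

lemma matrix_mult_transpose_sum:
  fixes P M :: "'a::comm_semiring_1^'n^'n"
  shows "(\<chi> i j. \<Sum>p\<in>UNIV. \<Sum>q\<in>UNIV. P $ i $ p * P $ j $ q * M $ p $ q) = P ** M ** transpose P"
proof -
  have "(P ** M ** transpose P) $ i $ j = (\<Sum>p\<in>UNIV. \<Sum>q\<in>UNIV. P $ i $ p * P $ j $ q * M $ p $ q)" for i j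
  proof -
    have "(P ** M ** transpose P) $ i $ j = (\<Sum>q\<in>UNIV. \<Sum>p\<in>UNIV. P $ i $ p * M $ p $ q * P $ j $ q)"
      unfolding matrix_matrix_mult_def transpose_def by (simp add: sum_distrib_right)
    also have "\<dots> = (\<Sum>p\<in>UNIV. \<Sum>q\<in>UNIV. P $ i $ p * P $ j $ q * M $ p $ q)"
      by (subst sum.swap) (simp add: ac_simps)
    finally show ?thesis .
  qed
  then show ?thesis
    by (simp add: vec_eq_iff)
qed

lemma transpose_mult_mult_component:
  fixes P M :: "real^'n^'n"
  shows "(transpose P ** M ** P) $ i $ j = (P *v axis i 1) \<bullet> (M *v (P *v axis j 1))"
proof -
  have "(transpose P ** M ** P) $ i $ j = (\<Sum>l\<in>UNIV. \<Sum>k\<in>UNIV. P $ k $ i * M $ k $ l * P $ l $ j)"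
    unfolding matrix_matrix_mult_def transpose_def by (simp add: sum_distrib_right)
  also have "\<dots> = (\<Sum>k\<in>UNIV. \<Sum>l\<in>UNIV. P $ k $ i * (M $ k $ l * P $ l $ j))"
    by (subst sum.swap) (simp add: ac_simps)
  also have "\<dots> = (P *v axis i 1) \<bullet> (M *v (P *v axis j 1))"
    unfolding matrix_vector_mult_basis
    by (simp add: column_def inner_vec_def matrix_vector_mult_def sum_distrib_left)
  finally show ?thesis .
qed

definition outer_prod :: "'a::times^'n \<Rightarrow> 'a^'m \<Rightarrow> 'a^'m^'n" where
  "outer_prod u v = (\<chi> i j. u $ i * v $ j)"

lemma outer_prod_mult_vector: "outer_prod u w *v v = (w \<bullet> v) *\<^sub>R (u::real^'n)"
  by (simp add: vec_eq_iff matrix_vector_mult_def outer_prod_def inner_vec_def sum_distrib_left algebra_simps)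

lemma matrix_mult_outer_prod: "M ** outer_prod u v = outer_prod (M *v u) (v::real^'n)"
  by (simp add: vec_eq_iff matrix_matrix_mult_def outer_prod_def matrix_vector_mult_def sum_distrib_left ac_simps)

lemma det_scaleR: "det (c *\<^sub>R (M::real^'n^'n)) = c ^ CARD('n) * det M"
proof -
  have "(\<chi> i. c *s M $ i) = c *\<^sub>R M"
    by (simp add: vec_eq_iff)
  then show ?thesis
    using det_rows_mul[of "\<lambda>i. c" "\<lambda>i. M $ i"] by simp
qed

lemma det_replace_column_mat_1:
  fixes z :: "real^'n"
  shows "det (\<chi> i j. if j = k then z $ i else mat 1 $ i $ j) = z $ k"
  using cramer_lemma[of k "mat 1 :: real^'n^'n" z] by (simp only: matrix_vector_mul_lid det_I mult_1_right)

lemma det_mat_1_plus_outer_prod: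
  fixes u w :: "real^'n"
  shows "det (mat 1 + outer_prod u w) = 1 + w \<bullet> u"
proof -
  let ?M = "mat 1 + outer_prod u w"
  have Mu: "?M *v u = (1 + w \<bullet> u) *\<^sub>R u"
    by (simp add: matrix_vector_mult_add_rdistrib outer_prod_mult_vector matrix_vector_mul_lid algebra_simps)
  consider "u = 0" | "u \<noteq> 0" "1 + w \<bullet> u = 0" | "u \<noteq> 0" "1 + w \<bullet> u \<noteq> 0"
    by blast
  then show ?thesis
  proof cases
    case 1
    then have "outer_prod u w = 0"
      by (simp add: vec_eq_iff outer_prod_def)
    then show ?thesis
      using 1 by simp
  next
    case 2
    then have "\<not> invertible ?M"
      using Mu matrix_left_invertible_ker invertible_left_inverse by (metis scale_eq_0_iff)
    then show ?thesis
      using 2 by (simp add: invertible_det_nz)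
  next
    case 3
    then obtain k where uk: "u $ k \<noteq> 0"
      by (metis vec_eq_iff zero_index)
    let ?x = "(1 / (1 + w \<bullet> u)) *\<^sub>R u"
    have Mx: "?M *v ?x = u"
      using 3 by (simp add: matrix_vector_mult_scaleR Mu)
    let ?E = "(\<chi> i j. if j = k then u $ i else mat 1 $ i $ j) :: real^'n^'n"
    let ?D = "(\<chi> i j. if i = k then (if j = k then 1 else w $ j) else mat 1 $ i $ j) :: real^'n^'n"
    \<comment> \<open>Replacing column k of M by u = M x factors as E ** D, so Cramer's rule yields x_k det M = u_k.\<close>
    have factor: "(\<chi> i j. if j = k then (?M *v ?x) $ i else ?M $ i $ j) = ?E ** ?D"
    proof -
      have "(?E ** ?D) $ i $ j = (\<Sum>l\<in>UNIV. (if l = k then u $ i * (if j = k then 1 else w $ j) else 0)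
          + (if l = i then (if i \<noteq> k \<and> i = j then 1 else 0) else 0))" for i j
        unfolding matrix_matrix_mult_def vec_lambda_beta by (rule sum.cong) (auto simp: mat_def)
      also have "\<dots> i j = (if j = k then u $ i else ?M $ i $ j)" for i j
        by (auto simp: sum.distrib outer_prod_def mat_def)
      finally show ?thesis
        unfolding Mx by (simp add: vec_eq_iff)
    qed
    have "transpose ?D = (\<chi> i j. if j = k then (\<chi> i. if i = k then 1 else w $ i) $ i else mat 1 $ i $ j)"
      by (auto simp: transpose_def vec_eq_iff mat_def)
    then have "det (transpose ?D) = 1"
      by (simp only: det_replace_column_mat_1) simp
    then have "?x $ k * det ?M = u $ k"
      using cramer_lemma[of k ?M ?x] unfolding factor det_mul det_replace_column_mat_1 by simp
    then have "u $ k * det ?M = u $ k * (1 + w \<bullet> u)"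
      using 3 by (simp add: field_simps)
    then show ?thesis
      using uk by simp
  qed
qed

lemma power_inverse_square_mult_square:
  fixes h :: real
  assumes "0 < h"
  shows "(1 / h^2) ^ n * h^2 = h powr (2 * (1 - real n))"
proof -
  have "h powr (2 * (1 - real n)) = h powr 2 / h powr (real (2 * n))"
    by (simp add: powr_diff[symmetric] algebra_simps)
  also have "\<dots> = h^2 / (h^2)^n"
    using assms powr_realpow[OF assms, of "2 * n"] by (simp add: powr_numeral power_mult)
  finally show ?thesis
    by (simp add: power_one_over)
qed

lemma square_less_four: "-2 < g \<Longrightarrow> g < 2 \<Longrightarrow> g^2 < (4::real)"
  using mult_pos_pos[of "2 - g" "2 + g"] by (simp add: algebra_simps power2_eq_square)

lemma hh_pos: "-2 < g \<Longrightarrow> g < 2 \<Longrightarrow> 0 < hh g"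
  unfolding hh_def using square_less_four by simp

lemma hh_squared: "-2 < g \<Longrightarrow> g < 2 \<Longrightarrow> (hh g)^2 = 1 - g^2 / 4"
  unfolding hh_def using square_less_four[of g] by simp

lemma Bf_eq_sum_squares:
  assumes "-2 < g" "g < 2"
  shows "Bf g r X = (Af g r X)^2 + (hh g * qf r X)^2"
  unfolding Bf_def Af_def power_mult_distrib hh_squared[OF assms] by (simp add: power2_eq_square field_simps)

lemma Bf_pos: "-2 < g \<Longrightarrow> g < 2 \<Longrightarrow> 0 < qf r X \<Longrightarrow> 0 < Bf g r X"
  using hh_pos[of g] by (simp add: Bf_eq_sum_squares add_nonneg_pos)

lemma Kf_squared: "-2 < g \<Longrightarrow> g < 2 \<Longrightarrow> (Kf g r X)^2 = Bf g r X * (Jf g r X)^2"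
  unfolding Kf_def by (simp add: Bf_eq_sum_squares power_mult_distrib)

section \<open>Splitting R into (R^a, Z)\<close>

definition eN :: "real^('m::finite option)" where
  "eN = axis None 1"

definition horiz :: "real^('m::finite option) \<Rightarrow> real^('m option)" where
  "horiz X = X - (X $ None) *\<^sub>R eN"

definition rpad :: "real^'m^'m \<Rightarrow> real^('m::finite option)^('m option)" where
  "rpad r = (\<chi> p q. case (p, q) of (Some a, Some b) \<Rightarrow> r $ a $ b | _ \<Rightarrow> 0)"

lemma sum_UNIV_option: "(\<Sum>p\<in>(UNIV::'m::finite option set). f p) = f None + (\<Sum>a\<in>UNIV. f (Some a))"
proof -
  have "(\<Sum>p\<in>insert None (range Some). f p) = f None + (\<Sum>a\<in>UNIV. f (Some a))"
    by (subst sum.insert) (auto simp: sum.reindex intro: finite_imageI)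
  then show ?thesis by (simp add: UNIV_option_conv)
qed

lemma prod_UNIV_option: "(\<Prod>p\<in>(UNIV::'m::finite option set). f p) = f None * (\<Prod>a\<in>UNIV. f (Some a))"
proof -
  have "(\<Prod>p\<in>insert None (range Some). f p) = f None * (\<Prod>a\<in>UNIV. f (Some a))"
    by (subst prod.insert) (auto simp: prod.reindex intro: finite_imageI)
  then show ?thesis by (simp add: UNIV_option_conv)
qed

lemma inner_option: "(v::real^('m::finite option)) \<bullet> w = v $ None * w $ None + (\<Sum>a\<in>UNIV. v $ Some a * w $ Some a)"
  unfolding inner_vec_def by (simp add: sum_UNIV_option)

lemma eN_component: "eN $ p = (if p = None then 1 else 0)"
  unfolding eN_def axis_def by simp

lemma eN_None [simp]: "eN $ None = 1"
  by (simp add: eN_component)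

lemma inner_eN [simp]: "eN \<bullet> w = w $ None" "w \<bullet> eN = w $ None"
  unfolding eN_def by (simp_all add: inner_axis inner_axis')

lemma horiz_component: "horiz X $ p = (if p = None then 0 else X $ p)"
  unfolding horiz_def by (simp add: eN_component)

lemma horiz_None [simp]: "horiz X $ None = 0"
  by (simp add: horiz_component)

lemma horiz_line: "horiz (X + s *\<^sub>R v) = horiz X + s *\<^sub>R horiz v"
  unfolding horiz_def by (simp add: algebra_simps)

lemma inner_horiz: "horiz v \<bullet> w = v \<bullet> w - v $ None * w $ None"
  unfolding horiz_def by (simp add: inner_diff_left)

lemma rpad_mult_None [simp]: "(rpad r *v w) $ None = 0"
  unfolding rpad_def matrix_vector_mult_def by simp

lemma rpad_mult_horiz: "rpad r *v horiz w = rpad r *v w"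
  unfolding rpad_def horiz_def matrix_vector_mult_def
  by (auto simp: vec_eq_iff eN_component sum_UNIV_option algebra_simps split: option.split)

lemma rpad_mult_eN [simp]: "rpad r *v eN = 0"
  unfolding rpad_def matrix_vector_mult_def
  by (auto simp: vec_eq_iff eN_component sum_UNIV_option split: option.split)

lemma rfull_mult: "rfull r *v w = rpad r *v w + (w $ None) *\<^sub>R eN"
  unfolding rfull_def rpad_def matrix_vector_mult_def
  by (auto simp: vec_eq_iff sum_UNIV_option eN_component split: option.split)

lemma transpose_rpad: "(\<And>a b. r $ a $ b = r $ b $ a) \<Longrightarrow> transpose (rpad r) = rpad r"
  unfolding rpad_def transpose_def by (auto simp: vec_eq_iff split: option.split)

lemma inner_rpad_commute:
  assumes "\<And>a b. r $ a $ b = r $ b $ a"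
  shows "v \<bullet> (rpad r *v w) = w \<bullet> (rpad r *v v)"
  by (metis dot_lmul_matrix inner_commute transpose_matrix_vector transpose_rpad[OF assms])

lemma transpose_rfull: "(\<And>a b. r $ a $ b = r $ b $ a) \<Longrightarrow> transpose (rfull r) = rfull r"
  unfolding transpose_def rfull_def by (auto simp: vec_eq_iff split: option.split)

lemma qf_eq_sqrt_inner: "qf r X = sqrt (X \<bullet> (rpad r *v X))"
  unfolding qf_def inner_option
  by (simp add: rpad_def matrix_vector_mult_def sum_UNIV_option sum_distrib_left algebra_simps)

lemma inner_rpad_self: "0 < qf r X \<Longrightarrow> X \<bullet> (rpad r *v X) = (qf r X)^2"
  by (simp add: qf_eq_sqrt_inner)

lemma Sf_eq_sqrt_inner: "Sf r t = sqrt (t \<bullet> (rfull r *v t))"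
  unfolding Sf_def inner_vec_def matrix_vector_mult_def by (simp add: sum_distrib_left ac_simps)

lemma invertible_rfull:
  assumes r_pos: "\<And>x. x \<noteq> 0 \<Longrightarrow> 0 < x \<bullet> (r *v x)"
  shows "invertible (rfull r)"
proof (rule invertible_if_trivial_kernel)
  fix w :: "real^('a option)"
  assume w: "rfull r *v w = 0"
  define w' where "w' = (\<chi> a. w $ Some a)"
  have "w \<bullet> (rfull r *v w) = (w $ None)^2 + w' \<bullet> (r *v w')"
    unfolding inner_option w'_def
    by (simp add: matrix_vector_mult_def rfull_def sum_UNIV_option inner_vec_def power2_eq_square)
  moreover have "0 \<le> w' \<bullet> (r *v w')"
    using r_pos[of w'] by (cases "w' = 0") auto
  ultimately have "w $ None = 0" "w' \<bullet> (r *v w') = 0"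
    using w by (simp_all add: add_nonneg_eq_0_iff)
  then have "w' = 0"
    using r_pos by force
  then show "w = 0"
    using \<open>w $ None = 0\<close> by (simp add: vec_eq_iff w'_def) (metis option.exhaust)
qed

lemma bij_betw_map_permutation_Some:
  "bij_betw (map_permutation (UNIV::'m::finite set) Some)
     {p. p permutes (UNIV::'m set)} {P. P permutes (UNIV::'m option set) \<and> P None = None}"
proof (rule bij_betw_byWitness[where f' = "map_permutation (range Some) the"])
  have bij_Some: "bij_betw Some (UNIV::'m set) (range Some)"
    by (simp add: bij_betw_def)
  have bij_the: "bij_betw the (range Some) (UNIV::'m set)"
    by (auto simp: bij_betw_def inj_on_def image_iff)
  have permutes_range: "P permutes range Some" if "P permutes UNIV" "P None = None" for P :: "'m option \<Rightarrow> 'm option"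
    unfolding permutes_def
  proof (intro conjI allI impI)
    fix z :: "'m option"
    assume "z \<notin> range Some"
    then show "P z = z"
      using that by (cases z) auto
  next
    fix z
    show "\<exists>!x. P x = z"
      using that(1) unfolding permutes_def by blast
  qed
  have fixes_None: "map_permutation UNIV Some p None = None" for p :: "'m \<Rightarrow> 'm"
    unfolding map_permutation_def restrict_id_def by auto
  show "\<forall>p\<in>{p. p permutes (UNIV::'m set)}. map_permutation (range Some) the (map_permutation UNIV Some p) = p"
    by (simp add: map_permutation_compose_inv[OF bij_Some])
  show "\<forall>P\<in>{P. P permutes UNIV \<and> P None = None}.
      map_permutation (UNIV::'m set) Some (map_permutation (range Some) the P) = P"
  proof
    fix P :: "'m option \<Rightarrow> 'm option"
    assume "P \<in> {P. P permutes UNIV \<and> P None = None}"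
    then have "P permutes range Some"
      using permutes_range by blast
    then show "map_permutation UNIV Some (map_permutation (range Some) the P) = P"
      by (rule map_permutation_compose_inv[OF bij_the]) auto
  qed
  show "map_permutation UNIV Some ` {p. p permutes (UNIV::'m set)} \<subseteq> {P. P permutes UNIV \<and> P None = None}"
    using map_permutation_permutes[OF bij_Some] fixes_None by (auto intro: permutes_subset)
  show "map_permutation (range Some) the ` {P. P permutes UNIV \<and> P None = None} \<subseteq> {p. p permutes (UNIV::'m set)}"
    using map_permutation_permutes[OF bij_the] permutes_range by auto
qed

lemma det_rfull: "det (rfull r) = det (r::real^'m::finite^'m)"
proof -
  let ?term = "\<lambda>P. of_int (sign P) * (\<Prod>i\<in>UNIV. rfull r $ i $ P i)"
  let ?fixing_None = "{P. P permutes (UNIV::'m option set) \<and> P None = None}"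
  have "det (rfull r) = sum ?term {P. P permutes UNIV}"
    unfolding det_def ..
  also have "\<dots> = sum ?term ?fixing_None"
  proof (rule sum.mono_neutral_right)
    show "\<forall>P\<in>{P. P permutes UNIV} - ?fixing_None. ?term P = 0"
    proof
      fix P
      assume "P \<in> {P. P permutes UNIV} - ?fixing_None"
      then have "rfull r $ None $ P None = 0"
        unfolding rfull_def by (cases "P None") auto
      then have "(\<Prod>i\<in>UNIV. rfull r $ i $ P i) = 0"
        by (intro prod_zero) auto
      then show "?term P = 0"
        by simp
    qed
  qed (auto simp: finite_permutations)
  also have "\<dots> = (\<Sum>p | p permutes UNIV. of_int (sign p) * (\<Prod>a\<in>UNIV. r $ a $ p a))"
  proof (rule sum.reindex_bij_betw[OF bij_betw_map_permutation_Some, symmetric, THEN trans], rule sum.cong)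
    fix p :: "'m \<Rightarrow> 'm"
    assume "p \<in> {p. p permutes UNIV}"
    then have "sign (map_permutation UNIV Some p) = sign p"
      by (intro sign_map_permutation) auto
    moreover have "map_permutation UNIV Some p (Some a) = Some (p a)" for a
      by (rule map_permutation_apply) auto
    moreover have "map_permutation UNIV Some p None = None"
      unfolding map_permutation_def restrict_id_def by auto
    ultimately show "?term (map_permutation UNIV Some p) = of_int (sign p) * (\<Prod>a\<in>UNIV. r $ a $ p a)"
      by (simp add: prod_UNIV_option rfull_def)
  qed simp
  also have "\<dots> = det r"
    unfolding det_def ..
  finally show ?thesis .
qed

section \<open>Derivatives along coordinate lines\<close>

lemma partial_eqI:
  assumes "\<forall>\<^sub>F s in nhds 0. f (X + s *\<^sub>R axis p 1) = \<phi> s" and "(\<phi> has_real_derivative D) (at 0)"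
  shows "partial p f X = D"
  unfolding partial_def using assms by (simp add: DERIV_cong_ev DERIV_imp_deriv)

lemma sqrt_quadratic_has_derivative:
  fixes a b c :: real
  assumes "0 < a"
  shows "((\<lambda>s. sqrt (a + 2 * s * b + s^2 * c)) has_real_derivative b / sqrt a) (at 0)"
proof -
  have "((\<lambda>s. sqrt (a + 2 * s * b + s^2 * c)) has_real_derivative
      inverse (sqrt (a + 2 * 0 * b + 0^2 * c)) / 2 * (2 * b + 2 * 0 * c)) (at 0)"
    using assms by (intro DERIV_chain2[OF DERIV_real_sqrt]) (auto intro!: derivative_eq_intros)
  then show ?thesis
    by (simp add: inverse_eq_divide)
qed

definition q_grad :: "real^'m^'m \<Rightarrow> real^('m::finite option) \<Rightarrow> real^('m option)" where
  "q_grad r X = (1 / qf r X) *\<^sub>R (rpad r *v X)"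

lemma inner_q_grad: "q_grad r X \<bullet> v = (rpad r *v X) \<bullet> v / qf r X"
  by (simp add: q_grad_def)

definition J_grad :: "real \<Rightarrow> real^'m^'m \<Rightarrow> real^('m::finite option) \<Rightarrow> real^('m option)" where
  "J_grad g r X = (Jf g r X * g / (2 * Bf g r X)) *\<^sub>R (qf r X *\<^sub>R eN - Zc X *\<^sub>R q_grad r X)"

lemma inner_J_grad:
  "J_grad g r X \<bullet> v = Jf g r X * g / (2 * Bf g r X) * (qf r X * v $ None - Zc X * ((rpad r *v X) \<bullet> v / qf r X))"
  by (simp add: J_grad_def inner_q_grad inner_diff_left)

lemma Zc_line: "Zc (X + s *\<^sub>R v) = Zc X + s * v $ None"
  unfolding Zc_def by simp

lemma qf_line_deriv:
  assumes r_sym: "\<And>a b. r $ a $ b = r $ b $ a" and q: "0 < qf r X"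
  shows "((\<lambda>s. qf r (X + s *\<^sub>R v)) has_real_derivative q_grad r X \<bullet> v) (at 0)"
proof -
  have line: "qf r (X + s *\<^sub>R v)
      = sqrt (X \<bullet> (rpad r *v X) + 2 * s * (v \<bullet> (rpad r *v X)) + s^2 * (v \<bullet> (rpad r *v v)))" for s
  proof -
    have "X \<bullet> (rpad r *v v) = v \<bullet> (rpad r *v X)"
      by (rule inner_rpad_commute[OF r_sym])
    then show ?thesis
      by (simp add: qf_eq_sqrt_inner matrix_vector_right_distrib matrix_vector_mult_scaleR
          inner_add_left inner_add_right power2_eq_square algebra_simps)
  qed
  have "0 < X \<bullet> (rpad r *v X)"
    using q by (simp add: qf_eq_sqrt_inner)
  from sqrt_quadratic_has_derivative[OF this] show ?thesis
    unfolding line by (simp add: qf_eq_sqrt_inner q_grad_def inner_commute)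
qed

lemma eventually_qf_line_pos:
  assumes r_sym: "\<And>a b. r $ a $ b = r $ b $ a" and q: "0 < qf r X"
  shows "\<forall>\<^sub>F s in nhds 0. 0 < qf r (X + s *\<^sub>R v)"
proof -
  have "((\<lambda>s. qf r (X + s *\<^sub>R v)) \<longlongrightarrow> qf r X) (at 0)"
    using DERIV_isCont[OF qf_line_deriv[OF assms]] by (simp add: isCont_def)
  then have "\<forall>\<^sub>F s in at 0. 0 < qf r (X + s *\<^sub>R v)"
    using q by (rule order_tendstoD(1))
  then show ?thesis
    using q by (simp add: eventually_nhds_conv_at)
qed

lemma Jf_line_deriv:
  assumes r_sym: "\<And>a b. r $ a $ b = r $ b $ a" and g: "-2 < g" "g < 2" and q: "0 < qf r X"
  shows "((\<lambda>s. Jf g r (X + s *\<^sub>R v)) has_real_derivative J_grad g r X \<bullet> v) (at 0)"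
proof -
  define u where "u s = Af g r (X + s *\<^sub>R v) / (hh g * qf r (X + s *\<^sub>R v))" for s
  define u' where "u' = ((v $ None + g * (q_grad r X \<bullet> v) / 2) * qf r X - Af g r X * (q_grad r X \<bullet> v))
      / (hh g * (qf r X)^2)"
  have h: "0 < hh g" and B: "0 < Bf g r X"
    using hh_pos Bf_pos g q by auto
  have "(u has_real_derivative u') (at 0)"
    unfolding u_def u'_def Af_def Zc_line using h q
    by (auto intro!: derivative_eq_intros qf_line_deriv[OF r_sym q] simp: field_simps power2_eq_square)
  then have exp_deriv: "((\<lambda>s. exp (GG g / 2 * arctan (u s))) has_real_derivative
      exp (GG g / 2 * arctan (u 0)) * (GG g / 2 * (inverse (1 + (u 0)^2) * u'))) (at 0)"
    by (intro DERIV_chain2[OF DERIV_exp] DERIV_cmult DERIV_chain2[OF DERIV_arctan])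
  have J0: "exp (GG g / 2 * arctan (u 0)) = Jf g r X"
    using q by (simp add: Jf_def Phif_def u_def)
  have arctan_factor: "inverse (1 + (u 0)^2) = (hh g * qf r X)^2 / Bf g r X"
    using h q by (simp add: u_def Bf_eq_sum_squares[OF g] field_simps)
  have "GG g / 2 * (inverse (1 + (u 0)^2) * u') = g / (2 * Bf g r X) * (qf r X * v $ None - Zc X * (q_grad r X \<bullet> v))"
    unfolding arctan_factor u'_def using h q B by (simp add: GG_def Af_def field_simps power2_eq_square)
  then have deriv_value: "exp (GG g / 2 * arctan (u 0)) * (GG g / 2 * (inverse (1 + (u 0)^2) * u')) = J_grad g r X \<bullet> v"
    unfolding J0 by (simp add: J_grad_def inner_diff_left)
  have "\<forall>\<^sub>F s in nhds 0. Jf g r (X + s *\<^sub>R v) = exp (GG g / 2 * arctan (u s))"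
    using eventually_qf_line_pos[OF r_sym q, of v] by eventually_elim (simp add: Jf_def Phif_def u_def)
  from DERIV_cong_ev[OF refl this refl] show ?thesis
    using exp_deriv unfolding deriv_value by simp
qed

lemma Bf_line_deriv:
  assumes r_sym: "\<And>a b. r $ a $ b = r $ b $ a" and q: "0 < qf r X"
  shows "((\<lambda>s. Bf g r (X + s *\<^sub>R v)) has_real_derivative
      (2 * Zc X + g * qf r X) * v $ None + (g * Zc X + 2 * qf r X) * (q_grad r X \<bullet> v)) (at 0)"
  unfolding Bf_def Zc_line
  by (auto intro!: derivative_eq_intros qf_line_deriv[OF r_sym q] simp: algebra_simps)

definition halfK2_grad :: "real \<Rightarrow> real^'m^'m \<Rightarrow> real^('m::finite option) \<Rightarrow> real^('m option)" where
  "halfK2_grad g r X = (Jf g r X)^2 *\<^sub>R ((Zc X + g * qf r X) *\<^sub>R eN + rpad r *v X)"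

lemma halfK2_line_deriv:
  assumes r_sym: "\<And>a b. r $ a $ b = r $ b $ a" and g: "-2 < g" "g < 2" and q: "0 < qf r X"
  shows "((\<lambda>s. (Kf g r (X + s *\<^sub>R v))^2 / 2) has_real_derivative halfK2_grad g r X \<bullet> v) (at 0)"
proof -
  have B: "0 < Bf g r X"
    using Bf_pos g q by auto
  have "((\<lambda>s. Bf g r (X + s *\<^sub>R v) * (Jf g r (X + s *\<^sub>R v))^2 / 2) has_real_derivative
      ((2 * Zc X + g * qf r X) * v $ None + (g * Zc X + 2 * qf r X) * (q_grad r X \<bullet> v)) * (Jf g r X)^2 / 2
      + Bf g r X * (2 * Jf g r X * (J_grad g r X \<bullet> v)) / 2) (at 0)"
    by (auto intro!: derivative_eq_intros Bf_line_deriv[OF r_sym q] Jf_line_deriv[OF r_sym g q])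
  moreover have "((2 * Zc X + g * qf r X) * v $ None + (g * Zc X + 2 * qf r X) * (q_grad r X \<bullet> v)) * (Jf g r X)^2 / 2
      + Bf g r X * (2 * Jf g r X * (J_grad g r X \<bullet> v)) / 2 = halfK2_grad g r X \<bullet> v"
    using B q by (simp add: J_grad_def halfK2_grad_def q_grad_def inner_diff_left inner_add_left field_simps power2_eq_square)
  ultimately show ?thesis
    by (simp add: Kf_squared[OF g])
qed

lemma partial_halfK2:
  assumes r_sym: "\<And>a b. r $ a $ b = r $ b $ a" and g: "-2 < g" "g < 2" and q: "0 < qf r X"
  shows "partial p (\<lambda>Y. (Kf g r Y)^2 / 2) X = halfK2_grad g r X $ p"
proof -
  have "partial p (\<lambda>Y. (Kf g r Y)^2 / 2) X = halfK2_grad g r X \<bullet> axis p 1"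
    by (rule partial_eqI[OF _ halfK2_line_deriv[OF assms]]) simp
  then show ?thesis
    by (simp add: inner_axis)
qed

definition halfK2_hess :: "real \<Rightarrow> real^'m^'m \<Rightarrow> real^('m::finite option)
    \<Rightarrow> real^('m option) \<Rightarrow> real^('m option) \<Rightarrow> real" where
  "halfK2_hess g r X v w =
     2 * Jf g r X * (J_grad g r X \<bullet> v) * ((Zc X + g * qf r X) * w $ None + (rpad r *v X) \<bullet> w)
     + (Jf g r X)^2 * ((v $ None + g * (q_grad r X \<bullet> v)) * w $ None + (rpad r *v v) \<bullet> w)"

lemma halfK2_grad_line_deriv:
  assumes r_sym: "\<And>a b. r $ a $ b = r $ b $ a" and g: "-2 < g" "g < 2" and q: "0 < qf r X"
  shows "((\<lambda>s. halfK2_grad g r (X + s *\<^sub>R v) \<bullet> w) has_real_derivative halfK2_hess g r X v w) (at 0)"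
proof -
  have "halfK2_grad g r (X + s *\<^sub>R v) \<bullet> w = (Jf g r (X + s *\<^sub>R v))^2 *
      ((Zc X + s * v $ None + g * qf r (X + s *\<^sub>R v)) * w $ None + ((rpad r *v X) \<bullet> w + s * ((rpad r *v v) \<bullet> w)))" for s
    by (simp add: halfK2_grad_def Zc_line matrix_vector_right_distrib matrix_vector_mult_scaleR inner_add_left)
  moreover have "((\<lambda>s. (Jf g r (X + s *\<^sub>R v))^2 *
      ((Zc X + s * v $ None + g * qf r (X + s *\<^sub>R v)) * w $ None + ((rpad r *v X) \<bullet> w + s * ((rpad r *v v) \<bullet> w))))
      has_real_derivative halfK2_hess g r X v w) (at 0)"
    by (auto intro!: derivative_eq_intros Jf_line_deriv[OF r_sym g q] qf_line_deriv[OF r_sym q]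
        simp: halfK2_hess_def algebra_simps power2_eq_square)
  ultimately show ?thesis
    by simp
qed

lemma gmet_eq_halfK2_hess:
  assumes r_sym: "\<And>a b. r $ a $ b = r $ b $ a" and g: "-2 < g" "g < 2" and q: "0 < qf r X"
  shows "gmet g r X $ p $ k = halfK2_hess g r X (axis p 1) (axis k 1)"
proof -
  have "\<forall>\<^sub>F s in nhds 0. partial k (\<lambda>Y. (Kf g r Y)^2 / 2) (X + s *\<^sub>R axis p 1)
      = halfK2_grad g r (X + s *\<^sub>R axis p 1) \<bullet> axis k 1"
    using eventually_qf_line_pos[OF r_sym q, of "axis p 1"]
    by eventually_elim (simp add: partial_halfK2[OF r_sym g] inner_axis)
  from partial_eqI[OF this halfK2_grad_line_deriv[OF r_sym g q]] show ?thesis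
    by (simp add: gmet_def)
qed

definition sigma_diff :: "real \<Rightarrow> real^'m^'m \<Rightarrow> real^('m::finite option) \<Rightarrow> real^('m option) \<Rightarrow> real^('m option)" where
  "sigma_diff g r X v = (hh g * Jf g r X) *\<^sub>R horiz v + (hh g * (J_grad g r X \<bullet> v)) *\<^sub>R horiz X
     + ((v $ None + g / 2 * (q_grad r X \<bullet> v)) * Jf g r X + Af g r X * (J_grad g r X \<bullet> v)) *\<^sub>R eN"

lemma sigma_eq: "sigma g r X = (hh g * Jf g r X) *\<^sub>R horiz X + (Af g r X * Jf g r X) *\<^sub>R eN"
  unfolding sigma_def by (auto simp: vec_eq_iff horiz_component eN_component split: option.split)

lemma sigma_line_deriv:
  assumes r_sym: "\<And>a b. r $ a $ b = r $ b $ a" and g: "-2 < g" "g < 2" and q: "0 < qf r X"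
  shows "((\<lambda>s. sigma g r (X + s *\<^sub>R v) $ k) has_real_derivative sigma_diff g r X v $ k) (at 0)"
proof -
  have "sigma g r (X + s *\<^sub>R v) $ k = hh g * Jf g r (X + s *\<^sub>R v) * (horiz X $ k + s * horiz v $ k)
      + (Zc X + s * v $ None + g * qf r (X + s *\<^sub>R v) / 2) * Jf g r (X + s *\<^sub>R v) * eN $ k" for s
    by (simp add: sigma_eq horiz_line Af_def Zc_line)
  moreover have "((\<lambda>s. hh g * Jf g r (X + s *\<^sub>R v) * (horiz X $ k + s * horiz v $ k)
      + (Zc X + s * v $ None + g * qf r (X + s *\<^sub>R v) / 2) * Jf g r (X + s *\<^sub>R v) * eN $ k)
      has_real_derivative sigma_diff g r X v $ k) (at 0)"
    by (auto intro!: derivative_eq_intros Jf_line_deriv[OF r_sym g q] qf_line_deriv[OF r_sym q]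
        simp: sigma_diff_def Af_def algebra_simps)
  ultimately show ?thesis
    by simp
qed

lemma sigjac_eq_sigma_diff:
  assumes r_sym: "\<And>a b. r $ a $ b = r $ b $ a" and g: "-2 < g" "g < 2" and q: "0 < qf r X"
  shows "sigjac g r X k p = sigma_diff g r X (axis p 1) $ k"
  unfolding sigjac_def by (rule partial_eqI[OF _ sigma_line_deriv[OF assms]]) simp

lemma linear_sigma_diff: "linear (sigma_diff g r X)"
  by (rule linearI) (simp_all add: sigma_diff_def horiz_def inner_add_right algebra_simps)

lemma matrix_sigma_diff_mult: "matrix (sigma_diff g r X) *v v = sigma_diff g r X v"
  using matrix_vector_mul(2)[OF linear_sigma_diff, of g r X] by metis

section \<open>The metric as a pullback\<close>

(* The entries of sigma'^T n sigma' and of the Hessian of K^2/2 in directions v and w, written with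
   a = r_pq R^p v^q, b = v^N, a' = r_pq R^p w^q, b' = w^N, rho = r_pq v^p w^q and H = h^2;
   J*g/(2*B)*(q*b - Z*(a/q)) is the derivative of J along v. *)
lemma finsleroid_metric_identity:
  fixes g Z q J H B A \<rho> a b a' b' :: real
  assumes H: "H = 1 - g^2/4" "0 < H" and q: "0 < q" and B: "B = Z^2 + g*q*Z + q^2" "0 < B"
    and A: "A = Z + g*q/2"
  shows "J^2 * \<rho> + J * ((J*g/(2*B)*(q*b' - Z*(a'/q))) * a + (J*g/(2*B)*(q*b - Z*(a/q))) * a')
     + q^2 * (J*g/(2*B)*(q*b - Z*(a/q))) * (J*g/(2*B)*(q*b' - Z*(a'/q)))
     + ((b + g*(a/q)/2)*J + A*(J*g/(2*B)*(q*b - Z*(a/q)))) * ((b' + g*(a'/q)/2)*J + A*(J*g/(2*B)*(q*b' - Z*(a'/q)))) / H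
     - g^2/(4*H*B) * (H*J*a + H*q^2*(J*g/(2*B)*(q*b - Z*(a/q))) + A*((b + g*(a/q)/2)*J + A*(J*g/(2*B)*(q*b - Z*(a/q)))))
                   * (H*J*a' + H*q^2*(J*g/(2*B)*(q*b' - Z*(a'/q))) + A*((b' + g*(a'/q)/2)*J + A*(J*g/(2*B)*(q*b' - Z*(a'/q)))))
   = J^2 * (g / B * (q * b - Z * (a / q)) * ((Z + g*q) * b' + a') + (b + g * (a / q)) * b' + \<rho>)"
proof -
  have nonzero: "B \<noteq> 0" "H \<noteq> 0" "q \<noteq> 0"
    using H q B by auto
  have relations: "4 * H = 4 - g^2" "2 * A = 2 * Z + g * q" "B = Z^2 + g*q*Z + q^2"
    using H A B by simp_all
  show ?thesis
    using nonzero
    apply (simp add: field_simps)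
    using relations by algebra
qed

lemma finsleroid_jacobian_kernel:
  fixes g h q Z J B A a b :: real
  assumes pos: "0 < h" "0 < J" "0 < q" "0 < B" and B: "B = Z^2 + g*q*Z + q^2" and A: "A = Z + g*q/2"
    and horizontal: "h * J * a + h * (J*g/(2*B) * (q*b - Z*(a/q))) * q^2 = 0"
    and vertical: "(b + g/2*(a/q)) * J + A * (J*g/(2*B) * (q*b - Z*(a/q))) = 0"
  shows "a = 0 \<and> b = 0"
proof -
  have lin1: "a * (2*B - g*q*Z) + g * q^3 * b = 0"
  proof -
    have "h*J*(2*B*q) * (a * (2*B - g*q*Z) + g*q^3*b)
        = (2*B*q)*(2*B) * (h * J * a + h * (J*g/(2*B) * (q*b - Z*(a/q))) * q^2)"
      using pos by (simp add: field_simps power2_eq_square power3_eq_cube)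
    then show ?thesis
      using pos horizontal by simp
  qed
  have lin2: "b * q * (2*B + A*g*q) + a * g * (B - A*Z) = 0"
  proof -
    have "J * (b * q * (2*B + A*g*q) + a * g * (B - A*Z))
        = (2*B*q) * ((b + g/2*(a/q)) * J + A * (J*g/(2*B) * (q*b - Z*(a/q))))"
      using pos by (simp add: field_simps power2_eq_square power3_eq_cube)
    then show ?thesis
      using pos vertical by simp
  qed
  \<comment> \<open>The determinant of this 2x2 system is 4 q B^2.\<close>
  have "a * (4*q*B^2) = 0" "b * (4*q*B^2) = 0"
    using lin1 lin2 B A by algebra+
  then show ?thesis
    using pos by simp
qed

definition L_upper :: "real \<Rightarrow> real^'m^'m \<Rightarrow> real^('m::finite option) \<Rightarrow> real^('m option)" where
  "L_upper g r X = (\<chi> p. sigma g r X $ p / Sf r (sigma g r X))"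

definition L_lower :: "real \<Rightarrow> real^'m^'m \<Rightarrow> real^('m::finite option) \<Rightarrow> real^('m option)" where
  "L_lower g r X = rfull r *v L_upper g r X"

definition n_lower :: "real \<Rightarrow> real^'m^'m \<Rightarrow> real^('m::finite option) \<Rightarrow> real^('m option)^('m option)" where
  "n_lower g r X = (\<chi> i j. 1 / (hh g)^2 * rfull r $ i $ j - (GG g)^2 / 4 * L_lower g r X $ i * L_lower g r X $ j)"

definition n_upper :: "real \<Rightarrow> real^'m^'m \<Rightarrow> real^('m::finite option) \<Rightarrow> real^('m option)^('m option)" where
  "n_upper g r X = (\<chi> i j. (hh g)^2 * matrix_inv (rfull r) $ i $ j + g^2 / 4 * L_upper g r X $ i * L_upper g r X $ j)"

lemma n_lower_mult:
  "n_lower g r X *v u = (1 / (hh g)^2) *\<^sub>R (rfull r *v u) - ((GG g)^2 / 4 * (L_lower g r X \<bullet> u)) *\<^sub>R L_lower g r X"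
  unfolding n_lower_def
  by (simp add: vec_eq_iff matrix_vector_mult_def inner_vec_def sum_subtractf sum_distrib_left algebra_simps)

lemma n_upper_mult:
  "n_upper g r X *v w = (hh g)^2 *\<^sub>R (matrix_inv (rfull r) *v w) + (g^2 / 4 * (L_upper g r X \<bullet> w)) *\<^sub>R L_upper g r X"
  unfolding n_upper_def
  by (simp add: vec_eq_iff matrix_vector_mult_def inner_vec_def sum.distrib sum_distrib_left algebra_simps)

lemma sigma_diff_None:
  "sigma_diff g r X v $ None = (v $ None + g / 2 * (q_grad r X \<bullet> v)) * Jf g r X + Af g r X * (J_grad g r X \<bullet> v)"
  by (simp add: sigma_diff_def)

lemma rpad_mult_sigma_diff:
  "rpad r *v sigma_diff g r X w
    = (hh g * Jf g r X) *\<^sub>R (rpad r *v w) + (hh g * (J_grad g r X \<bullet> w)) *\<^sub>R (rpad r *v X)"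
  by (simp add: sigma_diff_def matrix_vector_right_distrib matrix_vector_mult_scaleR rpad_mult_horiz)

lemma sigma_diff_inner_rpad:
  "sigma_diff g r X v \<bullet> (rpad r *v u)
    = hh g * Jf g r X * (v \<bullet> (rpad r *v u)) + hh g * (J_grad g r X \<bullet> v) * (X \<bullet> (rpad r *v u))"
  by (simp add: sigma_diff_def inner_add_left inner_horiz)

lemma rfull_mult_sigma:
  "rfull r *v sigma g r X = (hh g * Jf g r X) *\<^sub>R (rpad r *v X) + (Af g r X * Jf g r X) *\<^sub>R eN"
  by (simp add: rfull_mult sigma_eq matrix_vector_right_distrib matrix_vector_mult_scaleR rpad_mult_horiz
      horiz_component eN_component)

context
  fixes r :: "real^'m::finite^'m" and g :: real and X :: "real^('m option)"
  assumes r_sym: "\<And>a b. r $ a $ b = r $ b $ a" and g_range: "-2 < g" "g < 2" and q_pos: "0 < qf r X"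
begin

lemma sigma_rfull_sigma: "sigma g r X \<bullet> (rfull r *v sigma g r X) = (Jf g r X)^2 * Bf g r X"
  unfolding rfull_mult_sigma
  by (simp add: sigma_eq inner_add_left inner_add_right inner_horiz inner_rpad_self q_pos
      Bf_eq_sum_squares g_range power2_eq_square algebra_simps)

lemma Sf_sigma: "Sf r (sigma g r X) = Jf g r X * sqrt (Bf g r X)"
  by (simp add: Sf_eq_sqrt_inner sigma_rfull_sigma real_sqrt_mult Jf_def)

lemma L_upper_eq: "L_upper g r X = (1 / (Jf g r X * sqrt (Bf g r X))) *\<^sub>R sigma g r X"
  by (simp add: L_upper_def Sf_sigma vec_eq_iff)

lemma L_lower_eq: "L_lower g r X = (1 / sqrt (Bf g r X)) *\<^sub>R (hh g *\<^sub>R (rpad r *v X) + Af g r X *\<^sub>R eN)"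
  using Bf_pos[OF g_range q_pos]
  by (simp add: L_lower_def L_upper_eq matrix_vector_mult_scaleR rfull_mult_sigma Jf_def scaleR_add_right)

lemma inner_L_lower_L_upper: "L_lower g r X \<bullet> L_upper g r X = 1"
proof -
  have "0 < Bf g r X" "0 < Jf g r X"
    using Bf_pos[OF g_range q_pos] by (simp_all add: Jf_def)
  then show ?thesis
    unfolding L_lower_def inner_commute[of "rfull r *v _"] L_upper_eq
    by (simp add: matrix_vector_mult_scaleR sigma_rfull_sigma power2_eq_square field_simps)
qed

lemma sigma_diff_rfull_sigma_diff:
  "sigma_diff g r X v \<bullet> (rfull r *v sigma_diff g r X w)
    = (hh g)^2 * (Jf g r X)^2 * ((rpad r *v v) \<bullet> w)
      + (hh g)^2 * Jf g r X * (J_grad g r X \<bullet> w) * ((rpad r *v X) \<bullet> v)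
      + (hh g)^2 * Jf g r X * (J_grad g r X \<bullet> v) * ((rpad r *v X) \<bullet> w)
      + (hh g)^2 * (J_grad g r X \<bullet> v) * (J_grad g r X \<bullet> w) * (qf r X)^2
      + sigma_diff g r X v $ None * sigma_diff g r X w $ None"
proof -
  have swap: "v \<bullet> (rpad r *v w) = (rpad r *v v) \<bullet> w" "X \<bullet> (rpad r *v w) = (rpad r *v X) \<bullet> w"
      "v \<bullet> (rpad r *v X) = (rpad r *v X) \<bullet> v"
    using inner_rpad_commute[OF r_sym] by (metis inner_commute)+
  show ?thesis
    by (simp add: rfull_mult rpad_mult_sigma_diff inner_add_right sigma_diff_inner_rpad swap
        inner_rpad_self q_pos power2_eq_square algebra_simps)
qed

lemma inner_L_lower_sigma_diff:
  "L_lower g r X \<bullet> sigma_diff g r X v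
    = (1 / sqrt (Bf g r X)) * ((hh g)^2 * Jf g r X * ((rpad r *v X) \<bullet> v)
       + (hh g)^2 * (qf r X)^2 * (J_grad g r X \<bullet> v) + Af g r X * sigma_diff g r X v $ None)"
proof -
  have swap: "(rpad r *v X) \<bullet> sigma_diff g r X v = sigma_diff g r X v \<bullet> (rpad r *v X)"
      "v \<bullet> (rpad r *v X) = (rpad r *v X) \<bullet> v"
    by (simp_all add: inner_commute)
  show ?thesis
    by (simp add: L_lower_eq inner_add_left swap sigma_diff_inner_rpad inner_rpad_self q_pos
        power2_eq_square algebra_simps)
qed

lemma sigma_diff_n_lower_sigma_diff:
  "sigma_diff g r X v \<bullet> (n_lower g r X *v sigma_diff g r X w) = halfK2_hess g r X v w"
proof -
  define J B A Z q h where "J = Jf g r X" and "B = Bf g r X" and "A = Af g r X" and "Z = Zc X"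
    and "q = qf r X" and "h = hh g"
  define a b a' b' \<rho> where "a = (rpad r *v X) \<bullet> v" and "b = v $ None" and "a' = (rpad r *v X) \<bullet> w"
    and "b' = w $ None" and "\<rho> = (rpad r *v v) \<bullet> w"
  define jv jw cv cw where "jv = J_grad g r X \<bullet> v" and "jw = J_grad g r X \<bullet> w"
    and "cv = sigma_diff g r X v $ None" and "cw = sigma_diff g r X w $ None"
  note defs = J_def B_def A_def Z_def q_def h_def a_def b_def a'_def b'_def \<rho>_def jv_def jw_def cv_def cw_def
  have pos: "0 < h" "0 < q" "0 < B"
    unfolding defs using hh_pos Bf_pos g_range q_pos by auto
  have jv: "jv = J*g/(2*B)*(q*b - Z*(a/q))" and jw: "jw = J*g/(2*B)*(q*b' - Z*(a'/q))"
    unfolding defs by (simp_all add: inner_J_grad)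
  have cv: "cv = (b + g*(a/q)/2)*J + A*jv" and cw: "cw = (b' + g*(a'/q)/2)*J + A*jw"
    unfolding defs by (simp_all add: sigma_diff_None inner_q_grad)
  have "sigma_diff g r X v \<bullet> (n_lower g r X *v sigma_diff g r X w)
      = (1 / h^2) * (h^2*J^2*\<rho> + h^2*J*jw*a + h^2*J*jv*a' + h^2*jv*jw*q^2 + cv*cw)
        - (g / h)^2 / 4 * ((1 / sqrt B) * (h^2*J*a' + h^2*q^2*jw + A*cw))
          * ((1 / sqrt B) * (h^2*J*a + h^2*q^2*jv + A*cv))"
    unfolding defs
    by (simp add: n_lower_mult inner_diff_right sigma_diff_rfull_sigma_diff inner_L_lower_sigma_diff
        inner_commute[of "sigma_diff g r X v" "L_lower g r X"] GG_def)
  also have "\<dots> = J^2*\<rho> + J*(jw*a + jv*a') + q^2*jv*jw + cv*cw / h^2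
      - g^2/(4*h^2*B) * (h^2*J*a + h^2*q^2*jv + A*cv) * (h^2*J*a' + h^2*q^2*jw + A*cw)"
  proof -
    define s where "s = sqrt B"
    have "0 < s" "B = s^2"
      using pos by (simp_all add: s_def)
    then show ?thesis
      using pos unfolding s_def[symmetric] by (simp add: field_simps power2_eq_square)
  qed
  also have "\<dots> = J^2 * (g / B * (q*b - Z*(a/q)) * ((Z + g*q)*b' + a') + (b + g*(a/q))*b' + \<rho>)"
    unfolding cv cw jv jw
    by (rule finsleroid_metric_identity) (use pos in \<open>simp_all add: defs hh_squared g_range square_less_four Bf_def Af_def\<close>)
  also have "\<dots> = halfK2_hess g r X v w"
    using pos unfolding halfK2_hess_def defs[symmetric] jv
    by (simp add: inner_q_grad defs[symmetric] field_simps power2_eq_square)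
  finally show ?thesis .
qed

lemma gmet_eq_pullback_n_lower:
  "gmet g r X = transpose (matrix (sigma_diff g r X)) ** n_lower g r X ** matrix (sigma_diff g r X)"
  by (simp add: vec_eq_iff transpose_mult_mult_component matrix_sigma_diff_mult
      sigma_diff_n_lower_sigma_diff gmet_eq_halfK2_hess r_sym g_range q_pos)

lemma sigma_diff_eq_0_imp_eq_0:
  assumes "sigma_diff g r X w = 0"
  shows "w = 0"
proof -
  let ?a = "(rpad r *v X) \<bullet> w" and ?b = "w $ None"
  have pos: "0 < hh g" "0 < Jf g r X" "0 < qf r X" "0 < Bf g r X"
    using hh_pos Bf_pos g_range q_pos by (auto simp: Jf_def)
  have "sigma_diff g r X w \<bullet> (rpad r *v X) = 0" "sigma_diff g r X w $ None = 0"
    using assms by simp_all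
  then have "hh g * Jf g r X * ?a + hh g * (J_grad g r X \<bullet> w) * (qf r X)^2 = 0"
      "(?b + g/2 * (?a / qf r X)) * Jf g r X + Af g r X * (J_grad g r X \<bullet> w) = 0"
    using inner_commute[of w "rpad r *v X"]
    by (simp_all add: sigma_diff_inner_rpad inner_rpad_self q_pos sigma_diff_None inner_q_grad)
  then have "?a = 0 \<and> ?b = 0"
    unfolding inner_J_grad
    by (intro finsleroid_jacobian_kernel[OF pos]) (simp_all add: Bf_def Af_def)
  then have "J_grad g r X \<bullet> w = 0"
    by (simp add: inner_J_grad)
  then have "horiz w = 0"
    using assms pos by (simp add: sigma_diff_def inner_q_grad \<open>?a = 0 \<and> ?b = 0\<close>)
  then show ?thesis
    using \<open>?a = 0 \<and> ?b = 0\<close> by (simp add: horiz_def)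
qed

lemma invertible_matrix_sigma_diff: "invertible (matrix (sigma_diff g r X))"
  using sigma_diff_eq_0_imp_eq_0 by (intro invertible_if_trivial_kernel) (simp add: matrix_sigma_diff_mult)

lemma n_lower_mult_n_upper:
  assumes r_pos: "\<And>x. x \<noteq> 0 \<Longrightarrow> 0 < x \<bullet> (r *v x)"
  shows "n_lower g r X ** n_upper g r X = mat 1"
proof -
  let ?h = "hh g" and ?Lu = "L_upper g r X" and ?Ll = "L_lower g r X"
  have rr: "rfull r *v (matrix_inv (rfull r) *v w) = w" for w
    by (simp add: matrix_vector_mul_assoc matrix_inv_invertible[OF invertible_rfull[OF r_pos]])
  have Ll_inv: "?Ll \<bullet> (matrix_inv (rfull r) *v w) = ?Lu \<bullet> w" for w
    by (metis L_lower_def dot_lmul_matrix inner_commute rr transpose_matrix_vector transpose_rfull[OF r_sym])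
  have coeff: "1 / ?h^2 * (g^2/4) - (GG g)^2 / 4 * (?h^2 + g^2/4) = 0"
    using hh_pos[OF g_range] hh_squared[OF g_range] by (simp add: GG_def field_simps power2_eq_square)
  have "n_lower g r X *v (n_upper g r X *v w) = w" for w
  proof -
    let ?c = "g^2/4 * (?Lu \<bullet> w)"
    have "rfull r *v (n_upper g r X *v w) = ?h^2 *\<^sub>R w + ?c *\<^sub>R ?Ll"
      by (simp add: n_upper_mult matrix_vector_right_distrib matrix_vector_mult_scaleR rr L_lower_def)
    moreover have "?Ll \<bullet> (n_upper g r X *v w) = ?h^2 * (?Lu \<bullet> w) + ?c"
      by (simp add: n_upper_mult inner_add_right Ll_inv inner_L_lower_L_upper r_sym g_range q_pos)
    ultimately have "n_lower g r X *v (n_upper g r X *v w)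
        = w + ((1 / ?h^2 * (g^2/4) - (GG g)^2 / 4 * (?h^2 + g^2/4)) * (?Lu \<bullet> w)) *\<^sub>R ?Ll"
      using hh_pos[OF g_range] by (simp add: n_lower_mult scaleR_add_right scaleR_diff_left algebra_simps)
    then show ?thesis
      unfolding coeff by simp
  qed
  then show ?thesis
    by (simp add: matrix_eq matrix_vector_mul_assoc[symmetric] matrix_vector_mul_lid)
qed

lemma det_n_lower: "det (n_lower g r X) = hh g powr (2 * (1 - real CARD('m option))) * det r"
proof -
  define c where "c = - (g^2/4)"
  let ?h = "hh g" and ?N = "CARD('m option)" and ?u = "c *\<^sub>R L_upper g r X"
  have h: "0 < ?h" "?h^2 = 1 - g^2/4"
    using hh_pos[OF g_range] hh_squared[OF g_range] by simp_all
  have "rfull r ** (mat 1 + outer_prod ?u (L_lower g r X))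
      = rfull r + outer_prod (c *\<^sub>R L_lower g r X) (L_lower g r X)"
    by (simp add: matrix_add_ldistrib matrix_mul_rid matrix_mult_outer_prod matrix_vector_mult_scaleR L_lower_def)
  moreover have "n_lower g r X = (1 / ?h^2) *\<^sub>R (rfull r + outer_prod (c *\<^sub>R L_lower g r X) (L_lower g r X))"
    using h by (simp add: n_lower_def c_def outer_prod_def vec_eq_iff GG_def field_simps power2_eq_square)
  ultimately have factor: "n_lower g r X = (1 / ?h^2) *\<^sub>R (rfull r ** (mat 1 + outer_prod ?u (L_lower g r X)))"
    by simp
  have "det (mat 1 + outer_prod ?u (L_lower g r X)) = ?h^2"
    using inner_L_lower_L_upper h by (simp add: det_mat_1_plus_outer_prod c_def)
  then have "det (n_lower g r X) = (1 / ?h^2) ^ ?N * (det r * ?h^2)"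
    unfolding factor det_scaleR det_mul det_rfull by simp
  also have "\<dots> = ((1 / ?h^2) ^ ?N * ?h^2) * det r"
    by (simp only: mult_ac)
  also have "\<dots> = ?h powr (2 * (1 - real ?N)) * det r"
    by (simp only: power_inverse_square_mult_square[OF h(1)])
  finally show ?thesis .
qed

end

theorem theorem2p15:
  fixes r :: "real^'m::finite^'m" and g :: real and R :: "real^('m option)"
  assumes r_sym: "\<And>a b. r $ a $ b = r $ b $ a"
    and r_pos: "\<And>x. x \<noteq> 0 \<Longrightarrow> x \<bullet> (r *v x) > 0"
    and g_range: "-2 < g" "g < 2"
    and q_pos: "qf r R > 0"
  shows
    "let t = sigma g r R;
         Lu = (\<chi> p. t $ p / Sf r t);
         Ll = rfull r *v Lu;
         nup = (\<chi> rr s. \<Sum>p\<in>UNIV. \<Sum>q\<in>UNIV.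
                  sigjac g r R rr p * sigjac g r R s q * matrix_inv (gmet g r R) $ p $ q)
     in nup = (\<chi> rr s. (hh g)^2 * matrix_inv (rfull r) $ rr $ s + g^2 / 4 * Lu $ rr * Lu $ s)
      \<and> matrix_inv nup = (\<chi> rr s. 1 / (hh g)^2 * rfull r $ rr $ s - (GG g)^2 / 4 * Ll $ rr * Ll $ s)
      \<and> det (matrix_inv nup) = hh g powr (2 * (1 - real CARD('m option))) * det r"
proof -
  let ?P = "matrix (sigma_diff g r R)"
  have inverse: "n_lower g r R ** n_upper g r R = mat 1"
    using n_lower_mult_n_upper[OF r_sym g_range q_pos r_pos] .
  have "(\<chi> rr s. \<Sum>p\<in>UNIV. \<Sum>q\<in>UNIV. sigjac g r R rr p * sigjac g r R s q * matrix_inv (gmet g r R) $ p $ q)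
      = ?P ** matrix_inv (gmet g r R) ** transpose ?P"
    unfolding matrix_mult_transpose_sum[symmetric]
    by (simp add: matrix_def sigjac_eq_sigma_diff[OF r_sym g_range q_pos])
  also have "\<dots> = n_upper g r R"
    unfolding gmet_eq_pullback_n_lower[OF r_sym g_range q_pos]
    by (rule matrix_inv_congruence[OF invertible_matrix_sigma_diff[OF r_sym g_range q_pos] inverse])
  finally have nup: "(\<chi> rr s. \<Sum>p\<in>UNIV. \<Sum>q\<in>UNIV.
      sigjac g r R rr p * sigjac g r R s q * matrix_inv (gmet g r R) $ p $ q) = n_upper g r R" .
  have "matrix_inv (n_upper g r R) = n_lower g r R"
    using inverse matrix_left_right_inverse matrix_inv_unique by blast
  then show ?thesis
    using det_n_lower[OF r_sym g_range q_pos]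
    unfolding Let_def nup by (simp add: n_upper_def n_lower_def L_lower_def L_upper_def)
qed

end
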